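(* Let $\{G_k\}_{k\ge0}$ be a nonnegative real sequence with $G_0=G_1\ge0$ and $G_{k+1}\le\phi_1G_k+\phi_2G_{k-1}$ for all $k\ge1$, where $\phi_1,\phi_2\ge0$ and $\phi_1+\phi_2<1$. Let $\phi=\frac{-\phi_1+\sqrt{\phi_1^2+4\phi_2}}{2}$ (the largest root of $t^2+\phi_1t-\phi_2=0$) and $\rho=\phi+\phi_1$. Then: 1. $G_{k+1}\le(1+\phi)(\phi+\phi_1)^kG_0$ for all $k\ge1$. 2. With $R_1=\frac{1+\phi}{\phi+\rho}$, $R_2=\frac{1-\rho}{\phi+\rho}$, $R_3=\frac{\rho+\phi_2}{\phi+\rho}$, $R_4=\frac{\phi-\phi_2}{\phi+\rho}$: for $k\ge1$ even, $G_{k+1}\le(R_1\rho^{k+1}+R_2\phi^{k+1})G_0$ and $G_k\le(R_1\rho^k-R_2\phi^k)G_0$; for $k\ge1$ odd, $G_{k+1}\le(R_3\rho^k-R_4\phi^k)G_0$ and $G_k\le(R_3\rho^{k-1}+R_4\phi^{k-1})G_0$. Here $0\le\phi<1$ and $0<\rho<1$. *)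

theory Defs
  imports Complex_Main
begin

end

theory Submission
  imports Defs
begin

text \<open>Both estimates compare G with solutions of the linear recurrence
  \<open>g (k+2) = \<phi>1 g (k+1) + \<phi>2 g k\<close>, whose characteristic roots are \<open>\<rho>\<close> and \<open>-\<phi>\<close>.
  For the first bound, \<open>\<rho> \<phi> = \<phi>2\<close> and \<open>\<rho> - \<phi> = \<phi>1\<close> show that \<open>G (k+1) + \<phi> G k\<close>
  shrinks at least by the factor \<open>\<rho>\<close> per step. For the second, the nonnegative
  coefficients let an induction on pairs of consecutive terms bound G by the solution
  \<open>R1 \<rho>^k - R2 (-\<phi>)^k\<close> with initial values \<open>1, 1\<close>, scaled by \<open>G 0\<close>; splitting by the
  parity of k turns this into the stated formulas.\<close>

lemma larger_quadratic_root:
  fixes a b :: real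
  assumes "0 \<le> a" "0 \<le> b"
  defines "\<phi> \<equiv> (- a + sqrt (a\<^sup>2 + 4 * b)) / 2"
  shows "\<phi>\<^sup>2 + a * \<phi> = b" and "0 \<le> \<phi>"
proof -
  have "(sqrt (a\<^sup>2 + 4 * b))\<^sup>2 = a\<^sup>2 + 4 * b"
    using assms by simp
  then show "\<phi>\<^sup>2 + a * \<phi> = b"
    unfolding \<phi>_def by (simp add: power2_eq_square field_simps)
  have "a \<le> sqrt (a\<^sup>2 + 4 * b)"
    using assms by (simp add: real_le_rsqrt)
  then show "0 \<le> \<phi>"
    unfolding \<phi>_def by simp
qed

lemma larger_quadratic_root_bounds:
  fixes a b \<phi> :: "'a :: linordered_field"
  assumes "0 \<le> a" "0 \<le> b" "0 < a + b" "a + b < 1"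
    and root: "\<phi>\<^sup>2 + a * \<phi> = b" and "0 \<le> \<phi>"
  shows "0 < \<phi> + a" and "\<phi> + a < 1"
proof -
  have shifted_root: "(\<phi> + a)\<^sup>2 = a * (\<phi> + a) + b"
    using root by (simp add: power2_eq_square algebra_simps)
  show pos: "0 < \<phi> + a"
  proof (rule ccontr)
    assume "\<not> 0 < \<phi> + a"
    then have "\<phi> = 0" "a = 0" using assms by auto
    then show False using root assms by simp
  qed
  show "\<phi> + a < 1"
  proof (rule ccontr)
    assume "\<not> \<phi> + a < 1"
    then have "b \<le> b * (\<phi> + a)" and "\<phi> + a \<le> (\<phi> + a) * (\<phi> + a)"
      using assms pos by (simp_all add: mult_le_cancel_left1 mult_le_cancel_right1)
    then have "(\<phi> + a) * (\<phi> + a) \<le> (a + b) * (\<phi> + a)"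
      using shifted_root by (simp add: power2_eq_square algebra_simps)
    then have "\<phi> + a \<le> a + b"
      using pos by simp
    with \<open>\<not> \<phi> + a < 1\<close> \<open>a + b < 1\<close> show False by simp
  qed
qed

lemma power_root_recurrence:
  fixes r a b :: "'a :: comm_semiring_1"
  assumes "r\<^sup>2 = a * r + b"
  shows "r ^ (k + 2) = a * r ^ (k + 1) + b * r ^ k"
proof -
  have "r ^ (k + 2) = r\<^sup>2 * r ^ k"
    by (metis power_add mult.commute)
  then show ?thesis
    using assms by (simp add: algebra_simps)
qed

lemma recurrence_inequality_comparison:
  fixes g x :: "nat \<Rightarrow> 'a :: ordered_semiring"
  assumes "0 \<le> a" "0 \<le> b"
    and g_rec: "\<And>k. g (k + 2) \<le> a * g (k + 1) + b * g k"
    and x_rec: "\<And>k. x (k + 2) = a * x (k + 1) + b * x k"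
    and "g 0 \<le> x 0" "g 1 \<le> x 1"
  shows "g k \<le> x k"
proof -
  have "g k \<le> x k \<and> g (k + 1) \<le> x (k + 1)"
  proof (induction k)
    case 0
    then show ?case using assms by simp
  next
    case (Suc k)
    have "g (k + 2) \<le> a * g (k + 1) + b * g k"
      by (rule g_rec)
    also have "\<dots> \<le> a * x (k + 1) + b * x k"
      using Suc assms by (intro add_mono mult_left_mono) auto
    also have "\<dots> = x (k + 2)"
      by (rule x_rec[symmetric])
    finally show ?case
      using Suc by simp
  qed
  then show ?thesis ..
qed

lemma recurrence_inequality_closed_form_bound:
  fixes g :: "nat \<Rightarrow> 'a :: linordered_field"
  assumes "0 \<le> a" "0 \<le> b"
    and g_rec: "\<And>k. g (k + 2) \<le> a * g (k + 1) + b * g k"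
    and r: "r\<^sup>2 = a * r + b" and s: "s\<^sup>2 = a * s + b" and "r \<noteq> s"
    and "g 0 \<le> c" "g 1 \<le> c"
  shows "g k \<le> ((1 - s) / (r - s) * r ^ k - (1 - r) / (r - s) * s ^ k) * c"
proof (rule recurrence_inequality_comparison[where g = g, OF \<open>0 \<le> a\<close> \<open>0 \<le> b\<close> g_rec])
  let ?x = "\<lambda>k. ((1 - s) / (r - s) * r ^ k - (1 - r) / (r - s) * s ^ k) * c"
  show "?x (k + 2) = a * ?x (k + 1) + b * ?x k" for k
    using power_root_recurrence[OF r, of k] power_root_recurrence[OF s, of k]
    by (simp add: algebra_simps)
  have "r - s \<noteq> 0"
    using \<open>r \<noteq> s\<close> by simp
  moreover have "(1 - s) - (1 - r) = r - s" "(1 - s) * r - (1 - r) * s = r - s"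
    by (simp_all add: algebra_simps)
  ultimately have "(1 - s) / (r - s) - (1 - r) / (r - s) = 1"
    and "(1 - s) / (r - s) * r - (1 - r) / (r - s) * s = 1"
    by (simp_all add: diff_divide_distrib[symmetric])
  then have x0: "?x 0 = c" and x1: "?x 1 = c"
    by (simp_all only: power_0 power_one_right mult_1_right mult_1_left)
  show "g 0 \<le> ?x 0" "g 1 \<le> ?x 1"
    unfolding x0 x1 by fact+
qed

lemma recurrence_inequality_geometric_bound:
  fixes g :: "nat \<Rightarrow> 'a :: {ordered_cancel_comm_semiring, comm_semiring_1}"
  assumes "0 \<le> \<rho>" "0 \<le> \<phi>" "\<And>k. 0 \<le> g k"
    and g_rec: "\<And>k. g (k + 2) \<le> a * g (k + 1) + \<rho> * \<phi> * g k"
    and "\<rho> = \<phi> + a"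
  shows "g (k + 1) \<le> \<rho> ^ k * (g 1 + \<phi> * g 0)"
proof -
  have "g (k + 1) + \<phi> * g k \<le> \<rho> ^ k * (g 1 + \<phi> * g 0)"
  proof (induction k)
    case 0
    then show ?case by simp
  next
    case (Suc k)
    have "g (k + 2) + \<phi> * g (k + 1) \<le> a * g (k + 1) + \<rho> * \<phi> * g k + \<phi> * g (k + 1)"
      using g_rec by (rule add_right_mono)
    also have "\<dots> = \<rho> * (g (k + 1) + \<phi> * g k)"
      using \<open>\<rho> = \<phi> + a\<close> by (simp add: algebra_simps)
    also have "\<dots> \<le> \<rho> * (\<rho> ^ k * (g 1 + \<phi> * g 0))"
      using Suc \<open>0 \<le> \<rho>\<close> by (rule mult_left_mono)
    finally show ?case
      by (simp add: algebra_simps)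
  qed
  moreover have "0 \<le> \<phi> * g k"
    using \<open>0 \<le> \<phi>\<close> \<open>0 \<le> g k\<close> by (rule mult_nonneg_nonneg)
  ultimately show ?thesis
    by (meson add_increasing2 order_refl order_trans)
qed

theorem theorem1:
  fixes G :: "nat \<Rightarrow> real" and \<phi>1 \<phi>2 \<phi> \<rho> R1 R2 R3 R4 :: real
  assumes nonneg: "\<And>k. G k \<ge> 0"
    and G01: "G 0 = G 1" and G0: "G 0 \<ge> 0"
    and rec: "\<And>k. k \<ge> 1 \<Longrightarrow> G (k + 1) \<le> \<phi>1 * G k + \<phi>2 * G (k - 1)"
    and p1: "\<phi>1 \<ge> 0" and p2: "\<phi>2 \<ge> 0" and psum: "\<phi>1 + \<phi>2 < 1"
    and nondeg: "\<phi>1 + \<phi>2 > 0"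
  defines "\<phi> \<equiv> (- \<phi>1 + sqrt (\<phi>1\<^sup>2 + 4 * \<phi>2)) / 2"
    and "\<rho> \<equiv> \<phi> + \<phi>1"
    and "R1 \<equiv> (1 + \<phi>) / (\<phi> + \<rho>)"
    and "R2 \<equiv> (1 - \<rho>) / (\<phi> + \<rho>)"
    and "R3 \<equiv> (\<rho> + \<phi>2) / (\<phi> + \<rho>)"
    and "R4 \<equiv> (\<phi> - \<phi>2) / (\<phi> + \<rho>)"
  shows "(\<forall>k\<ge>1. G (k + 1) \<le> (1 + \<phi>) * (\<phi> + \<phi>1) ^ k * G 0)
    \<and> (\<forall>k\<ge>1. even k \<longrightarrow>
          G (k + 1) \<le> (R1 * \<rho> ^ (k + 1) + R2 * \<phi> ^ (k + 1)) * G 0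
        \<and> G k \<le> (R1 * \<rho> ^ k - R2 * \<phi> ^ k) * G 0)
    \<and> (\<forall>k\<ge>1. odd k \<longrightarrow>
          G (k + 1) \<le> (R3 * \<rho> ^ k - R4 * \<phi> ^ k) * G 0
        \<and> G k \<le> (R3 * \<rho> ^ (k - 1) + R4 * \<phi> ^ (k - 1)) * G 0)
    \<and> 0 \<le> \<phi> \<and> \<phi> < 1 \<and> 0 < \<rho> \<and> \<rho> < 1"
proof -
  have root: "\<phi>\<^sup>2 + \<phi>1 * \<phi> = \<phi>2" and "0 \<le> \<phi>"
    using larger_quadratic_root[OF p1 p2] unfolding \<phi>_def by simp_all
  have "0 < \<rho>" "\<rho> < 1"
    using larger_quadratic_root_bounds[OF p1 p2 nondeg psum root \<open>0 \<le> \<phi>\<close>] \<rho>_def by simp_all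
  have \<rho>\<phi>: "\<rho> * \<phi> = \<phi>2"
    using root by (simp add: \<rho>_def power2_eq_square algebra_simps)
  have G_rec: "G (k + 2) \<le> \<phi>1 * G (k + 1) + \<phi>2 * G k" for k
    using rec[of "k + 1"] by (simp add: numeral_2_eq_2)
  have geometric: "G (k + 1) \<le> (1 + \<phi>) * \<rho> ^ k * G 0" for k
  proof -
    have "G (k + 1) \<le> \<rho> ^ k * (G 1 + \<phi> * G 0)"
      using \<open>0 < \<rho>\<close> \<open>0 \<le> \<phi>\<close> nonneg G_rec \<rho>\<phi> \<rho>_def
      by (intro recurrence_inequality_geometric_bound[where a = \<phi>1]) simp_all
    then show ?thesis
      using G01 by (simp add: algebra_simps)
  qed
  have closed_form: "G k \<le> (R1 * \<rho> ^ k - R2 * (- \<phi>) ^ k) * G 0" for k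
  proof -
    have "\<rho>\<^sup>2 = \<phi>1 * \<rho> + \<phi>2" "(- \<phi>)\<^sup>2 = \<phi>1 * (- \<phi>) + \<phi>2" "\<rho> \<noteq> - \<phi>"
      using root \<open>0 < \<rho>\<close> \<open>0 \<le> \<phi>\<close> by (simp_all add: \<rho>_def power2_eq_square algebra_simps)
    from recurrence_inequality_closed_form_bound[OF p1 p2 G_rec this, of "G 0" k] G01
    show ?thesis by (simp add: R1_def R2_def add.commute)
  qed
  have "R3 = R1 * \<rho>" "R4 = R2 * \<phi>"
    using \<rho>\<phi> by (simp_all add: R1_def R2_def R3_def R4_def \<rho>_def algebra_simps)
  then have "odd k \<Longrightarrow> G (k + 1) \<le> (R3 * \<rho> ^ k - R4 * \<phi> ^ k) * G 0
        \<and> G k \<le> (R3 * \<rho> ^ (k - 1) + R4 * \<phi> ^ (k - 1)) * G 0" for k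
    using closed_form[of k] closed_form[of "k + 1"]
    by (cases k) (simp_all add: power_minus_odd power_minus_even mult.assoc)
  moreover have "even k \<Longrightarrow> G (k + 1) \<le> (R1 * \<rho> ^ (k + 1) + R2 * \<phi> ^ (k + 1)) * G 0
        \<and> G k \<le> (R1 * \<rho> ^ k - R2 * \<phi> ^ k) * G 0" for k
    using closed_form[of k] closed_form[of "k + 1"] by (simp add: power_minus_odd power_minus_even)
  ultimately show ?thesis
    using geometric p1 \<open>0 \<le> \<phi>\<close> \<open>0 < \<rho>\<close> \<open>\<rho> < 1\<close> \<rho>_def by auto
qed

end
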